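(* Let $G$ be a connected (bull, chair)-free graph. Then $\mathsf{lpt}(G) \le 5$.
   Context: All graphs are finite and simple. A chair is the graph obtained by subdividing one edge of the claw $K_{1,3}$ exactly once. A bull is the graph obtained from a four-vertex path by adding a vertex adjacent to exactly the two middle vertices of the path. A graph is (bull, chair)-free if it has no induced subgraph isomorphic to a bull or a chair. A longest path of a connected graph $G$ is a path of maximum length in $G$; a longest path transversal is a set of vertices meeting every longest path; $\mathsf{lpt}(G)$ is the minimum cardinality of a longest path transversal of $G$. *)

theory Defs
  imports Main
begin

definition simple_graph :: "'a set \<Rightarrow> ('a \<Rightarrow> 'a \<Rightarrow> bool) \<Rightarrow> bool" where
  "simple_graph V E \<longleftrightarrow> finite V \<and> (\<forall>u v. E u v \<longrightarrow> E v u)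
     \<and> (\<forall>v. \<not> E v v) \<and> (\<forall>u v. E u v \<longrightarrow> u \<in> V \<and> v \<in> V)"

definition connected_graph :: "'a set \<Rightarrow> ('a \<Rightarrow> 'a \<Rightarrow> bool) \<Rightarrow> bool" where
  "connected_graph V E \<longleftrightarrow> V \<noteq> {} \<and> (\<forall>u\<in>V. \<forall>v\<in>V. E\<^sup>*\<^sup>* u v)"

definition has_induced :: "'a set \<Rightarrow> ('a \<Rightarrow> 'a \<Rightarrow> bool) \<Rightarrow> nat \<Rightarrow> (nat \<Rightarrow> nat \<Rightarrow> bool) \<Rightarrow> bool" where
  "has_induced V E n H \<longleftrightarrow> (\<exists>f. inj_on f {..<n} \<and> f ` {..<n} \<subseteq> V \<and>
      (\<forall>i<n. \<forall>j<n. E (f i) (f j) \<longleftrightarrow> H i j))"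

text \<open>Bull: path 0-1-2-3 plus vertex 4 adjacent to 1 and 2.\<close>
definition bull_adj :: "nat \<Rightarrow> nat \<Rightarrow> bool" where
  "bull_adj i j \<longleftrightarrow> {i, j} \<in> {{0,1},{1,2},{2,3},{1,4},{2,4}}"

text \<open>Chair: claw with centre 0 and leaves 1,2,3, edge 0-3 subdivided by 4.\<close>
definition chair_adj :: "nat \<Rightarrow> nat \<Rightarrow> bool" where
  "chair_adj i j \<longleftrightarrow> {i, j} \<in> {{0,1},{0,2},{0,4},{4,3}}"

definition bull_chair_free :: "'a set \<Rightarrow> ('a \<Rightarrow> 'a \<Rightarrow> bool) \<Rightarrow> bool" where
  "bull_chair_free V E \<longleftrightarrow> \<not> has_induced V E 5 bull_adj \<and> \<not> has_induced V E 5 chair_adj"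

definition is_path :: "'a set \<Rightarrow> ('a \<Rightarrow> 'a \<Rightarrow> bool) \<Rightarrow> 'a list \<Rightarrow> bool" where
  "is_path V E p \<longleftrightarrow> p \<noteq> [] \<and> distinct p \<and> set p \<subseteq> V \<and>
     (\<forall>i. Suc i < length p \<longrightarrow> E (p ! i) (p ! Suc i))"

definition longest_path :: "'a set \<Rightarrow> ('a \<Rightarrow> 'a \<Rightarrow> bool) \<Rightarrow> 'a list \<Rightarrow> bool" where
  "longest_path V E p \<longleftrightarrow> is_path V E p \<and> (\<forall>q. is_path V E q \<longrightarrow> length q \<le> length p)"

definition lp_transversal :: "'a set \<Rightarrow> ('a \<Rightarrow> 'a \<Rightarrow> bool) \<Rightarrow> 'a set \<Rightarrow> bool" where
  "lp_transversal V E T \<longleftrightarrow> T \<subseteq> V \<and> (\<forall>p. longest_path V E p \<longrightarrow> set p \<inter> T \<noteq> {})"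

definition lpt :: "'a set \<Rightarrow> ('a \<Rightarrow> 'a \<Rightarrow> bool) \<Rightarrow> nat" where
  "lpt V E = (LEAST k. \<exists>T. lp_transversal V E T \<and> card T = k)"

end

theory Submission
  imports Defs
begin

(* A dominating set meets every longest path, since a longest path avoiding it could be
   prolonged at its first vertex.  So it suffices to find a dominating set of at most five
   vertices, or a Hamiltonian path (then any single vertex is a transversal).

   If G contains a claw with centre v and leaves a, b, c, the leaves dominate every vertex
   having a neighbour among them.  Call a vertex full if it sees all three leaves.  Forbidding
   chairs and bulls around the leaves shows that the remaining vertices are dominated by two
   more vertices: a full vertex f whose neighbourhood among them is inclusion-maximal,
   together with either a vertex seeing exactly two leaves or a second full vertex.

   If G is claw-free, a longest induced path q dominates G.  If q has at most five vertices,
   it is the dominating set.  Otherwise each vertex off q, unless it sees q_0 but not q_1, is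
   adjacent to q_j and q_(j+1) where q_j is its first neighbour on q; the vertices sharing
   the same q_j form a clique, and so do those seeing q_0 but not q_1.  Inserting these
   cliques into q gives a Hamiltonian path. *)

section \<open>Longest path transversals\<close>

lemma successively_iff_nth: "successively E p \<longleftrightarrow> (\<forall>i. Suc i < length p \<longrightarrow> E (p ! i) (p ! Suc i))"
proof (induction E p rule: successively.induct)
  case (3 E x y xs)
  have "(\<forall>i. Suc i < length (x # y # xs) \<longrightarrow> E ((x # y # xs) ! i) ((x # y # xs) ! Suc i))
    \<longleftrightarrow> E x y \<and> (\<forall>i. Suc i < length (y # xs) \<longrightarrow> E ((y # xs) ! i) ((y # xs) ! Suc i))"
    by (auto simp: nth_Cons split: nat.splits)
  then show ?case using 3 by simp
qed auto

lemma successively_if_clique: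
  "(\<And>x y. x \<in> set xs \<Longrightarrow> y \<in> set xs \<Longrightarrow> x \<noteq> y \<Longrightarrow> E x y) \<Longrightarrow> distinct xs \<Longrightarrow>
    successively E xs"
  by (induction xs) (auto simp: successively_Cons, metis hd_in_set)

lemma exists_clique_listing:
  assumes "finite K" "\<And>x y. x \<in> K \<Longrightarrow> y \<in> K \<Longrightarrow> x \<noteq> y \<Longrightarrow> E x y"
  shows "\<exists>xs. set xs = K \<and> distinct xs \<and> successively E xs"
proof -
  obtain xs where "set xs = K" "distinct xs" using finite_distinct_list[OF assms(1)] by blast
  then show ?thesis using successively_if_clique[of xs E] assms(2) by blast
qed

lemma is_path_iff_successively: "is_path V E p \<longleftrightarrow> p \<noteq> [] \<and> distinct p \<and> set p \<subseteq> V \<and> successively E p"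
  unfolding is_path_def successively_iff_nth by auto

definition dominating :: "'a set \<Rightarrow> ('a \<Rightarrow> 'a \<Rightarrow> bool) \<Rightarrow> 'a set \<Rightarrow> bool" where
  "dominating V E D \<longleftrightarrow> D \<subseteq> V \<and> (\<forall>u\<in>V. u \<in> D \<or> (\<exists>d\<in>D. E u d))"

lemma lpt_le_card: "lp_transversal V E T \<Longrightarrow> lpt V E \<le> card T"
  unfolding lpt_def by (rule Least_le) auto

text \<open>A longest path avoiding a dominating set could be prolonged at its first vertex.\<close>
lemma dominating_lp_transversal:
  assumes "simple_graph V E" "dominating V E D"
  shows "lp_transversal V E D"
  unfolding lp_transversal_def
proof (intro conjI allI impI)
  show "D \<subseteq> V" using assms(2) unfolding dominating_def by blast
  fix p assume lp: "longest_path V E p"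
  show "set p \<inter> D \<noteq> {}"
  proof
    assume avoid: "set p \<inter> D = {}"
    have p: "p \<noteq> []" "distinct p" "set p \<subseteq> V" "successively E p"
      using lp unfolding longest_path_def is_path_iff_successively by auto
    then have "hd p \<in> V - D" using avoid by (auto simp: hd_in_set disjoint_iff)
    then obtain d where "d \<in> D" "E (hd p) d" using assms(2) unfolding dominating_def by blast
    then have "is_path V E (d # p)"
      using p avoid assms unfolding is_path_iff_successively simple_graph_def dominating_def
      by (auto simp: successively_Cons)
    then show False using lp unfolding longest_path_def by fastforce
  qed
qed

lemma lpt_le_card_dominating: "simple_graph V E \<Longrightarrow> dominating V E D \<Longrightarrow> lpt V E \<le> card D"
  using lpt_le_card dominating_lp_transversal by blast

lemma lpt_le_one_if_hamiltonian_path: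
  assumes "simple_graph V E" "is_path V E h" "set h = V"
  shows "lpt V E \<le> 1"
proof -
  obtain x where x: "x \<in> V" using assms(2,3) unfolding is_path_def by fastforce
  have "lp_transversal V E {x}"
    unfolding lp_transversal_def
  proof (intro conjI allI impI)
    show "{x} \<subseteq> V" using x by simp
    fix p assume lp: "longest_path V E p"
    then have p: "distinct p" "set p \<subseteq> V" "length h \<le> length p"
      using assms(2) unfolding longest_path_def is_path_def by auto
    have "card V \<le> card (set p)"
      using p(1,3) assms(2,3) by (metis distinct_card is_path_def)
    then have "set p = V"
      using p(2) assms(1) unfolding simple_graph_def by (simp add: card_seteq)
    then show "set p \<inter> {x} \<noteq> {}" using x by auto
  qed
  then show ?thesis using lpt_le_card by fastforce
qed
section \<open>Bull- and chair-free graphs\<close>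

lemma has_induced_of_list:
  assumes "length xs = n" "distinct xs" "set xs \<subseteq> V" "\<forall>i<n. \<forall>j<n. E (xs ! i) (xs ! j) \<longleftrightarrow> H i j"
  shows "has_induced V E n H"
  unfolding has_induced_def
proof (intro exI conjI)
  show "inj_on ((!) xs) {..<n}" using assms(1,2) by (auto simp: inj_on_def nth_eq_iff_index_eq)
  show "(!) xs ` {..<n} \<subseteq> V" using assms(1,3) by auto
qed (fact assms(4))

locale bull_chair_free_graph =
  fixes V :: "'a set" and E :: "'a \<Rightarrow> 'a \<Rightarrow> bool"
  assumes simple: "simple_graph V E" and connected: "connected_graph V E"
    and free: "bull_chair_free V E"
begin

lemma adj_sym: "E u v \<longleftrightarrow> E v u"
  using simple unfolding simple_graph_def by blast

lemma adj_irrefl [simp]: "\<not> E v v"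
  using simple unfolding simple_graph_def by blast

lemma adj_in_V: "E u v \<Longrightarrow> u \<in> V" "E u v \<Longrightarrow> v \<in> V"
  using simple unfolding simple_graph_def by blast+

lemma finite_V: "finite V"
  using simple unfolding simple_graph_def by blast

lemma V_nonempty: "V \<noteq> {}"
  using connected unfolding connected_graph_def by blast

lemma no_chair:
  assumes "E c x" "E c y" "E c z" "E z t" "distinct [x, y, z]"
    "\<not> E x y" "\<not> E x z" "\<not> E y z" "\<not> E t c" "\<not> E t x" "\<not> E t y"
  shows False
proof -
  have "has_induced V E 5 chair_adj"
    by (rule has_induced_of_list[where xs = "[c, x, y, t, z]"])
      (use assms adj_in_V in \<open>auto simp: adj_sym less_Suc_eq numeral_eq_Suc chair_adj_def doubleton_eq_iff\<close>)
  then show False using free unfolding bull_chair_free_def by blast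
qed

lemma no_bull:
  assumes "E t1 t2" "E t2 t3" "E t1 t3" "E p1 t1" "E p2 t2"
    "\<not> E p1 t2" "\<not> E p1 t3" "\<not> E p2 t1" "\<not> E p2 t3" "\<not> E p1 p2"
  shows False
proof -
  have "has_induced V E 5 bull_adj"
    by (rule has_induced_of_list[where xs = "[p1, t1, t2, p2, t3]"])
      (use assms adj_in_V in \<open>auto simp: adj_sym less_Suc_eq numeral_eq_Suc bull_adj_def doubleton_eq_iff\<close>)
  then show False using free unfolding bull_chair_free_def by blast
qed

lemma connected_edge_leaving:
  assumes "U \<subseteq> V" "x \<in> U" "w \<in> V - U"
  shows "\<exists>u\<in>U. \<exists>y\<in>V - U. E u y"
proof -
  have "E\<^sup>*\<^sup>* x w" using connected assms unfolding connected_graph_def by blast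
  then show ?thesis using assms(3)
  proof (induction rule: rtranclp_induct)
    case base
    then show ?case using assms(2) by simp
  next
    case (step y z)
    then show ?case using adj_in_V by (cases "y \<in> U") blast+
  qed
qed

lemma exists_maximal_nbhd:
  assumes "P s\<^sub>0"
  shows "\<exists>s. P s \<and> (\<forall>y. P y \<longrightarrow> \<not> {z\<in>S. E z s} \<subset> {z\<in>S. E z y})"
proof -
  have nbhd_V: "{z\<in>S. E z y} \<subseteq> V" for y
    using adj_in_V by blast
  have "card {z\<in>S. E z y} < Suc (card V)" for y
    using card_mono[OF finite_V nbhd_V] by (simp add: less_Suc_eq_le)
  then obtain s where s: "P s" "\<forall>y. P y \<longrightarrow> card {z\<in>S. E z y} \<le> card {z\<in>S. E z s}"
    using ex_has_greatest_nat[of P s\<^sub>0 "\<lambda>y. card {z\<in>S. E z y}" "Suc (card V)"] assms by blast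
  have "\<not> {z\<in>S. E z s} \<subset> {z\<in>S. E z y}" if "P y" for y
    using psubset_card_mono[OF finite_subset[OF nbhd_V finite_V]] s(2) that by (meson leD)
  then show ?thesis using s(1) by blast
qed

definition independent_triple :: "'a \<Rightarrow> 'a \<Rightarrow> 'a \<Rightarrow> bool" where
  "independent_triple x y z \<longleftrightarrow> {x, y, z} \<subseteq> V \<and> distinct [x, y, z] \<and> \<not> E x y \<and> \<not> E x z \<and> \<not> E y z"

definition complete_to :: "'a set \<Rightarrow> 'a \<Rightarrow> bool" where
  "complete_to I f \<longleftrightarrow> f \<in> V \<and> (\<forall>x\<in>I. E f x)"

definition detached :: "'a set \<Rightarrow> 'a \<Rightarrow> bool" where
  "detached I u \<longleftrightarrow> u \<in> V - I \<and> (\<forall>x\<in>I. \<not> E u x)"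

lemma independent_triple_perm:
  "independent_triple x y z \<Longrightarrow> independent_triple y x z"
  "independent_triple x y z \<Longrightarrow> independent_triple x z y"
  unfolding independent_triple_def by (auto simp: adj_sym)

context
  fixes x y z :: 'a
  assumes triple: "independent_triple x y z"
begin

lemma single_nbr_adj_complete:
  assumes "complete_to {x, y, z} f" "E t x" "\<not> E t y" "\<not> E t z"
  shows "E t f"
proof (rule ccontr)
  assume "\<not> E t f"
  then show False
    by (intro no_chair[of f y z x t])
      (use assms triple in \<open>auto simp: adj_sym independent_triple_def complete_to_def\<close>)
qed

lemma detached_adj_single_nbr_adj_complete:
  assumes "complete_to {x, y, z} f" "detached {x, y, z} u" "E u t" "E t x" "\<not> E t y" "\<not> E t z"
  shows "E u f"
proof (rule ccontr)
  assume "\<not> E u f"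
  moreover have "E t f" using single_nbr_adj_complete assms(1,4-6) .
  moreover have "t \<noteq> y" "t \<noteq> z" using assms(4) triple unfolding independent_triple_def by (auto simp: adj_sym)
  ultimately show False
    by (intro no_chair[of f y z t u])
      (use assms triple in \<open>auto simp: adj_sym independent_triple_def complete_to_def detached_def\<close>)
qed

lemma detached_adj_complete_propagate:
  assumes "complete_to {x, y, z} f" "detached {x, y, z} w" "E w f" "detached {x, y, z} u" "E w u"
  shows "E u f"
proof (rule ccontr)
  assume "\<not> E u f"
  then show False
    by (intro no_chair[of f x y w u])
      (use assms triple in \<open>auto simp: adj_sym independent_triple_def complete_to_def detached_def\<close>)
qed

lemma double_nbr_not_adj_complete:
  assumes "E s x" "E s y" "\<not> E s z" "detached {x, y, z} w" "E s w" "complete_to {x, y, z} f" "\<not> E w f"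
  shows "\<not> E s f"
proof
  assume "E s f"
  then show False
    by (intro no_bull[of s f x w z])
      (use assms triple in \<open>auto simp: adj_sym independent_triple_def complete_to_def detached_def\<close>)
qed

lemma detached_adj_double_nbr_propagate:
  assumes "E s x" "E s y" "detached {x, y, z} w" "E s w" "detached {x, y, z} u" "E w u"
  shows "E u s"
proof (rule ccontr)
  assume "\<not> E u s"
  then show False
    by (intro no_chair[of s x y w u])
      (use assms triple in \<open>auto simp: adj_sym independent_triple_def detached_def\<close>)
qed

end

end

section \<open>Graphs containing a claw\<close>

locale claw_graph = bull_chair_free_graph +
  fixes a b c v :: 'a
  assumes leaves_independent: "independent_triple a b c"
    and centre_adj: "E v a" "E v b" "E v c"
begin

abbreviation leaves :: "'a set" where "leaves \<equiv> {a, b, c}"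

abbreviation full :: "'a \<Rightarrow> bool" where "full \<equiv> complete_to leaves"

definition sees_one_leaf :: "'a \<Rightarrow> bool" where
  "sees_one_leaf s \<longleftrightarrow> s \<in> V \<and> (\<exists>g\<in>leaves. \<forall>x\<in>leaves. E s x \<longleftrightarrow> x = g)"

definition sees_two_leaves :: "'a \<Rightarrow> bool" where
  "sees_two_leaves s \<longleftrightarrow> s \<in> V \<and> (\<exists>g\<in>leaves. \<forall>x\<in>leaves. E s x \<longleftrightarrow> x \<noteq> g)"

definition far :: "'a set" where
  "far = {z. detached leaves z \<and> (\<forall>f. full f \<longrightarrow> \<not> E z f)}"

definition near :: "'a set" where
  "near = {z. detached leaves z \<and> (\<exists>f. full f \<and> E z f)}"

lemma leaves_in_V: "a \<in> V" "b \<in> V" "c \<in> V"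
  using leaves_independent unfolding independent_triple_def by auto

lemma full_centre: "full v"
  using centre_adj adj_in_V unfolding complete_to_def by auto

lemma full_adj_leaf: "full f \<Longrightarrow> x \<in> leaves \<Longrightarrow> E f x \<and> E x f"
  unfolding complete_to_def by (auto simp: adj_sym)

lemma detached_nonadj_leaf: "detached leaves z \<Longrightarrow> x \<in> leaves \<Longrightarrow> \<not> E z x \<and> \<not> E x z"
  unfolding detached_def by (auto simp: adj_sym)

lemma vertex_cases:
  assumes "y \<in> V"
  shows "y \<in> leaves \<or> detached leaves y \<or> sees_one_leaf y \<or> sees_two_leaves y \<or> full y"
  using assms leaves_independent
  unfolding detached_def sees_one_leaf_def sees_two_leaves_def complete_to_def independent_triple_def
  by (cases "E y a"; cases "E y b"; cases "E y c") auto

lemma sees_one_leafE: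
  assumes "sees_one_leaf s"
  obtains x y z where "independent_triple x y z" "{x, y, z} = leaves" "E s x" "\<not> E s y" "\<not> E s z"
proof -
  obtain g where g: "g \<in> leaves" "\<forall>x\<in>leaves. E s x \<longleftrightarrow> x = g"
    using assms unfolding sees_one_leaf_def by blast
  note perm = independent_triple_perm
  have "g = a \<or> g = b \<or> g = c" using g(1) by auto
  then show thesis
    using that[OF leaves_independent] that[OF perm(1)[OF leaves_independent]]
      that[OF perm(1)[OF perm(2)[OF leaves_independent]]] g leaves_independent
    unfolding independent_triple_def by auto
qed

lemma sees_two_leavesE:
  assumes "sees_two_leaves s"
  obtains x y z where "independent_triple x y z" "{x, y, z} = leaves" "E s x" "E s y" "\<not> E s z"
proof -
  obtain g where g: "g \<in> leaves" "\<forall>x\<in>leaves. E s x \<longleftrightarrow> x \<noteq> g"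
    using assms unfolding sees_two_leaves_def by blast
  note perm = independent_triple_perm
  have "g = a \<or> g = b \<or> g = c" using g(1) by auto
  then show thesis
    using that[OF leaves_independent] that[OF perm(2)[OF leaves_independent]]
      that[OF perm(2)[OF perm(1)[OF leaves_independent]]] g leaves_independent
    unfolding independent_triple_def by auto
qed

lemma sees_two_leaves_propagate:
  assumes "sees_two_leaves s" "detached leaves w" "E s w" "detached leaves u" "E w u"
  shows "E u s"
  using assms(1)
proof (rule sees_two_leavesE)
  fix x y z assume "independent_triple x y z" "{x, y, z} = leaves" "E s x" "E s y"
  then show ?thesis using detached_adj_double_nbr_propagate[of x y z s w u] assms by simp
qed

lemma sees_two_leaves_not_adj_full:
  assumes "sees_two_leaves s" "detached leaves w" "E s w" "full f" "\<not> E w f"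
  shows "\<not> E s f"
  using assms(1)
proof (rule sees_two_leavesE)
  fix x y z assume "independent_triple x y z" "{x, y, z} = leaves" "E s x" "E s y" "\<not> E s z"
  then show ?thesis using double_nbr_not_adj_complete[of x y z s w f] assms by simp
qed

lemma detached_adj_sees_one_leaf_adj_full:
  assumes "sees_one_leaf t" "detached leaves u" "E u t" "full f"
  shows "E u f"
  using assms(1)
proof (rule sees_one_leafE)
  fix x y z assume "independent_triple x y z" "{x, y, z} = leaves" "E t x" "\<not> E t y" "\<not> E t z"
  then show ?thesis using detached_adj_single_nbr_adj_complete[of x y z f u t] assms by simp
qed

lemma sees_two_leaves_common_leaf:
  assumes "sees_two_leaves s" "sees_two_leaves y"
  shows "\<exists>x\<in>leaves. E s x \<and> E y x"
proof -
  obtain g h where "\<forall>x\<in>leaves. E s x \<longleftrightarrow> x \<noteq> g" "\<forall>x\<in>leaves. E y x \<longleftrightarrow> x \<noteq> h"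
    using assms unfolding sees_two_leaves_def by blast
  moreover have "\<exists>x\<in>leaves. x \<noteq> g \<and> x \<noteq> h"
    using leaves_independent unfolding independent_triple_def by auto
  ultimately show ?thesis by blast
qed

lemma sees_two_leaves_not_full: "sees_two_leaves s \<Longrightarrow> \<not> full s"
  unfolding sees_two_leaves_def complete_to_def by blast

lemma far_subset_V: "far \<subseteq> V"
  unfolding far_def detached_def by auto

lemma far_nbr_cases:
  assumes "u \<in> far" "E u y"
  shows "y \<in> far \<or> sees_two_leaves y"
proof -
  have u: "detached leaves u" "\<And>f. full f \<Longrightarrow> \<not> E u f" using assms(1) unfolding far_def by auto
  have "y \<notin> leaves" using u(1) assms(2) unfolding detached_def by auto
  moreover have "\<not> sees_one_leaf y" using detached_adj_sees_one_leaf_adj_full u full_centre assms(2) by blast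
  moreover have "\<not> full y" using u(2) assms(2) by blast
  moreover have "y \<in> far" if "detached leaves y"
    using detached_adj_complete_propagate[OF leaves_independent _ that _ u(1)] u(2) assms(2) that
    unfolding far_def by (auto simp: adj_sym)
  ultimately show ?thesis using vertex_cases[OF adj_in_V(2)[OF assms(2)]] by blast
qed

lemma far_edge_to_sees_two_leaves:
  assumes "far \<noteq> {}"
  shows "\<exists>u\<in>far. \<exists>y. sees_two_leaves y \<and> E u y"
proof -
  have "a \<in> V - far" using leaves_in_V unfolding far_def detached_def by auto
  then obtain u y where "u \<in> far" "y \<in> V - far" "E u y"
    using connected_edge_leaving[OF far_subset_V] assms by blast
  then show ?thesis using far_nbr_cases by blast
qed

lemma far_nbhd_mono:
  assumes s: "sees_two_leaves s" and y: "sees_two_leaves y"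
    and u: "u \<in> far" "E u y" "\<not> E u s" and z: "z \<in> far" "E z s"
  shows "{w\<in>far. E w s} \<subseteq> {w\<in>far. E w y}"
proof -
  have far_detached: "detached leaves w" "\<not> E w v" if "w \<in> far" for w
    using that full_centre unfolding far_def by auto
  have sv: "\<not> E s v"
    using sees_two_leaves_not_adj_full[OF s far_detached(1)[OF z(1)] _ full_centre] z
      far_detached(2)[OF z(1)] by (auto simp: adj_sym)
  have yv: "\<not> E y v"
    using sees_two_leaves_not_adj_full[OF y far_detached(1)[OF u(1)] _ full_centre] u
      far_detached(2)[OF u(1)] by (auto simp: adj_sym)
  obtain x where x: "x \<in> leaves" "E s x" "E y x" using sees_two_leaves_common_leaf[OF s y] by blast
  have ux: "\<not> E u x" using far_detached(1)[OF u(1)] x(1) unfolding detached_def by blast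
  have "v \<noteq> s" "v \<noteq> y" "y \<noteq> s"
    using u(2,3) full_centre sees_two_leaves_not_full[OF s] sees_two_leaves_not_full[OF y] by auto
  have ys: "E y s"
  proof (rule ccontr)
    assume "\<not> E y s"
    then show False
      by (intro no_chair[of x s v y u])
        (use \<open>v \<noteq> s\<close> \<open>v \<noteq> y\<close> \<open>y \<noteq> s\<close> x ux u centre_adj far_detached(2)[OF u(1)] sv yv
          in \<open>auto simp: adj_sym\<close>)
  qed
  show ?thesis
  proof (rule ccontr)
    assume "\<not> ?thesis"
    then obtain w where w: "w \<in> far" "E w s" "\<not> E w y" by blast
    have "\<not> E w u"
      using sees_two_leaves_propagate[OF s far_detached(1)[OF w(1)] _ far_detached(1)[OF u(1)]] w u(3)
      by (auto simp: adj_sym)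
    moreover have "\<not> E w x" using far_detached(1)[OF w(1)] x(1) unfolding detached_def by blast
    ultimately show False
      by (intro no_bull[of s y x w u]) (use ys x w u ux in \<open>auto simp: adj_sym\<close>)
  qed
qed

text \<open>Take s seeing two leaves with inclusion-maximal neighbourhood in \<open>far\<close>. An edge leaving
  the part of \<open>far\<close> missed by s would lead to a vertex seeing two leaves whose neighbourhood
  in \<open>far\<close> strictly contains that of s.\<close>
lemma far_dominated:
  assumes "far \<noteq> {}"
  shows "\<exists>s. sees_two_leaves s \<and> (\<forall>u\<in>far. E u s)"
proof -
  obtain y\<^sub>0 where "sees_two_leaves y\<^sub>0" using far_edge_to_sees_two_leaves[OF assms] by blast
  then obtain s where s: "sees_two_leaves s"
    and s_max: "\<And>y. sees_two_leaves y \<Longrightarrow> \<not> {z\<in>far. E z s} \<subset> {z\<in>far. E z y}"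
    using exists_maximal_nbhd[of sees_two_leaves y\<^sub>0 far] by blast
  have "E x s" if x: "x \<in> far" for x
  proof (rule ccontr)
    assume "\<not> E x s"
    define U where "U = far - {u. E u s}"
    have "U \<subseteq> V" "x \<in> U" "a \<in> V - U"
      using far_subset_V x \<open>\<not> E x s\<close> leaves_in_V unfolding U_def far_def detached_def by auto
    then obtain u y where u: "u \<in> U" "y \<in> V - U" "E u y"
      using connected_edge_leaving by blast
    then have u_far: "u \<in> far" "\<not> E u s" unfolding U_def by auto
    have far_detached: "detached leaves w" if "w \<in> far" for w using that unfolding far_def by auto
    consider "y \<in> far" | "sees_two_leaves y" using far_nbr_cases[OF u_far(1) u(3)] by blast
    then show False
    proof cases
      case 1
      then have "E y s" using u(2) unfolding U_def by blast
      then show False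
        using sees_two_leaves_propagate[OF s far_detached[OF 1] _ far_detached[OF u_far(1)]] u(3) u_far(2)
        by (auto simp: adj_sym)
    next
      case 2
      have "u \<in> {z\<in>far. E z y} - {z\<in>far. E z s}" using u(3) u_far by auto
      then obtain z where "z \<in> far" "E z s" using s_max[OF 2] by blast
      then have "{z\<in>far. E z s} \<subseteq> {z\<in>far. E z y}"
        using far_nbhd_mono[OF s 2 u_far(1) u(3) u_far(2)] by blast
      then show False using s_max[OF 2] \<open>u \<in> {z\<in>far. E z y} - {z\<in>far. E z s}\<close> by blast
    qed
  qed
  then show ?thesis using s by blast
qed

lemma near_nbhd_mono:
  assumes f: "full f" and g: "full g" and fg: "E f g" and z: "z \<in> near" "E z g" "\<not> E z f"
  shows "{w\<in>near. E w f} \<subseteq> {w\<in>near. E w g}"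
proof
  fix w assume w: "w \<in> {w\<in>near. E w f}"
  have detached: "detached leaves w" "detached leaves z" using w z(1) unfolding near_def by auto
  show "w \<in> {w\<in>near. E w g}"
  proof (rule ccontr)
    assume "\<not> ?thesis"
    then have wg: "\<not> E w g" using w by blast
    show False
    proof (cases "E w z")
      case True
      then show False
        using detached_adj_complete_propagate[OF leaves_independent f detached(1) _ detached(2)] w z(3)
        by blast
    next
      case False
      then show False
        using no_bull[of f g a w z] fg w wg z full_adj_leaf[OF f, of a] full_adj_leaf[OF g, of a]
          detached_nonadj_leaf[OF detached(1), of a] detached_nonadj_leaf[OF detached(2), of a]
        by (auto simp: adj_sym)
    qed
  qed
qed

lemma far_empty_if_nonadj_full:
  assumes f: "full f" and g: "full g" and "f \<noteq> g" "\<not> E f g"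
  shows "far = {}"
proof (rule ccontr)
  assume "far \<noteq> {}"
  then obtain s where s: "sees_two_leaves s" "\<forall>u\<in>far. E u s" using far_dominated by blast
  then obtain z where z: "z \<in> far" "E z s" using \<open>far \<noteq> {}\<close> by blast
  have z_far: "detached leaves z" "\<And>h. full h \<Longrightarrow> \<not> E z h" using z(1) unfolding far_def by auto
  have s_nonadj: "\<not> E s h" if "full h" for h
    using sees_two_leaves_not_adj_full[OF s(1) z_far(1) _ that z_far(2)[OF that]] z(2) by (simp add: adj_sym)
  obtain x where x: "x \<in> leaves" "E s x"
    using s(1) leaves_independent unfolding sees_two_leaves_def independent_triple_def by auto
  have "s \<noteq> f" "s \<noteq> g" using sees_two_leaves_not_full[OF s(1)] f g by auto
  moreover have "E f x" "E g x" using f g x(1) unfolding complete_to_def by auto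
  moreover have "\<not> E z x" using z_far(1) x(1) unfolding detached_def by auto
  ultimately show False
    using no_chair[of x f g s z] assms x(2) z(2) z_far(2)[OF f] z_far(2)[OF g] s_nonadj[OF f] s_nonadj[OF g]
    by (auto simp: adj_sym)
qed

lemma detached_adj_nonadj_full_pair:
  assumes f: "full f" and g: "full g" and h: "full h" and "f \<noteq> g" "\<not> E f g" "\<not> E f h"
    and z: "detached leaves z" "E z h"
  shows "E z f \<or> E z g"
proof (rule ccontr)
  assume nz: "\<not> (E z f \<or> E z g)"
  show False
  proof (cases "E g h")
    case True
    then show False
      using no_bull[of a h g f z] assms nz full_adj_leaf[OF f, of a] full_adj_leaf[OF g, of a]
        full_adj_leaf[OF h, of a] detached_nonadj_leaf[OF z(1), of a]
      by (auto simp: adj_sym)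
  next
    case False
    have "h \<noteq> f" "h \<noteq> g" using nz z(2) by auto
    then show False
      using no_chair[of a f g h z] assms nz False full_adj_leaf[OF f, of a] full_adj_leaf[OF g, of a]
        full_adj_leaf[OF h, of a] detached_nonadj_leaf[OF z(1), of a]
      by (auto simp: adj_sym)
  qed
qed

lemma vertex_near_leaves:
  assumes "u \<in> V"
  shows "u \<in> leaves \<or> (\<exists>x\<in>leaves. E u x) \<or> u \<in> near \<or> u \<in> far"
  using assms unfolding near_def far_def detached_def by auto

lemma near_covered_by_nonadj_full_pair:
  assumes f: "full f" and f_max: "\<And>h. full h \<Longrightarrow> \<not> {z\<in>near. E z f} \<subset> {z\<in>near. E z h}"
    and g: "full g" "f \<noteq> g" "\<not> E f g" and w: "w \<in> near"
  shows "E w f \<or> E w g"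
proof (cases "E w f")
  case False
  obtain h where h: "full h" "E w h" using w unfolding near_def by blast
  have "\<not> E f h" using f_max[OF h(1)] near_nbhd_mono[OF f h(1) _ w h(2) False] w h(2) False by blast
  then show ?thesis
    using detached_adj_nonadj_full_pair[OF f g(1) h(1) g(2,3)] w h(2) unfolding near_def by blast
qed simp

text \<open>Take a full vertex f whose neighbourhood in \<open>near\<close> is inclusion-maximal. Either f
  dominates \<open>near\<close>, and a vertex dominating \<open>far\<close> completes the set; or some full g,
  necessarily non-adjacent to f, sees a vertex of \<open>near\<close> missed by f, and then f and g
  together dominate \<open>near\<close> while \<open>far\<close> is empty.\<close>
lemma exists_dominating_leaves_plus_two: "\<exists>x y. dominating V E {a, b, c, x, y}"
proof -
  obtain f where f: "full f" and f_max: "\<And>g. full g \<Longrightarrow> \<not> {z\<in>near. E z f} \<subset> {z\<in>near. E z g}"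
    using exists_maximal_nbhd[of full v near] full_centre by blast
  have fV: "f \<in> V" using f unfolding complete_to_def by blast
  consider (near_dominated) "\<forall>z\<in>near. E z f" | (near_escapes) z where "z \<in> near" "\<not> E z f" by blast
  then show ?thesis
  proof cases
    case near_dominated
    obtain s where s: "s \<in> V" "\<forall>u\<in>far. E u s"
      using far_dominated leaves_in_V sees_two_leaves_def by (cases "far = {}") auto
    have "dominating V E {a, b, c, f, s}"
      unfolding dominating_def using leaves_in_V fV s near_dominated vertex_near_leaves by blast
    then show ?thesis by blast
  next
    case near_escapes
    then obtain g where g: "full g" "E z g" unfolding near_def by blast
    have "\<not> E f g"
      using f_max[OF g(1)] near_nbhd_mono[OF f g(1) _ near_escapes(1) g(2) near_escapes(2)] near_escapes g(2)
      by blast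
    moreover have "f \<noteq> g" using near_escapes(2) g(2) by blast
    ultimately have "far = {}" and "\<forall>w\<in>near. E w f \<or> E w g"
      using far_empty_if_nonadj_full near_covered_by_nonadj_full_pair f f_max g(1) by blast+
    then have "dominating V E {a, b, c, f, g}"
      unfolding dominating_def using leaves_in_V fV g(1) vertex_near_leaves
      unfolding complete_to_def by blast
    then show ?thesis by blast
  qed
qed

lemma lpt_le_5: "lpt V E \<le> 5"
proof -
  obtain x y where "dominating V E {a, b, c, x, y}" using exists_dominating_leaves_plus_two by blast
  then have "lpt V E \<le> card {a, b, c, x, y}" using lpt_le_card_dominating[OF simple] by blast
  also have "\<dots> \<le> 5" using card_length[of "[a, b, c, x, y]"] by simp
  finally show ?thesis .
qed

end

section \<open>Claw-free graphs\<close>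

definition claw_free :: "('a \<Rightarrow> 'a \<Rightarrow> bool) \<Rightarrow> bool" where
  "claw_free E \<longleftrightarrow> (\<forall>c x y z. E c x \<and> E c y \<and> E c z \<and> distinct [x, y, z] \<longrightarrow> E x y \<or> E x z \<or> E y z)"

definition induced_path :: "'a set \<Rightarrow> ('a \<Rightarrow> 'a \<Rightarrow> bool) \<Rightarrow> 'a list \<Rightarrow> bool" where
  "induced_path V E q \<longleftrightarrow> is_path V E q \<and>
     (\<forall>i<length q. \<forall>j<length q. E (q ! i) (q ! j) \<longrightarrow> i = Suc j \<or> j = Suc i)"

context bull_chair_free_graph
begin

lemma induced_path_rev:
  assumes "induced_path V E q"
  shows "induced_path V E (rev q)"
proof -
  have "is_path V E (rev q)"
    using assms adj_sym unfolding induced_path_def is_path_iff_successively by auto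
  moreover have "i = Suc j \<or> j = Suc i"
    if "i < length q" "j < length q" "E (rev q ! i) (rev q ! j)" for i j
  proof -
    have "length q - Suc i = Suc (length q - Suc j) \<or> length q - Suc j = Suc (length q - Suc i)"
      using assms that unfolding induced_path_def by (simp add: rev_nth)
    then show ?thesis using that by auto
  qed
  ultimately show ?thesis unfolding induced_path_def by simp
qed

lemma induced_path_Cons:
  assumes "induced_path V E q" "x \<in> V - set q" "E x (q ! 0)"
    "\<And>k. 0 < k \<Longrightarrow> k < length q \<Longrightarrow> \<not> E x (q ! k)"
  shows "induced_path V E (x # q)"
proof -
  have "q \<noteq> []" using assms(1) unfolding induced_path_def is_path_def by simp
  then have "is_path V E (x # q)"
    using assms unfolding induced_path_def is_path_iff_successively by (auto simp: successively_Cons hd_conv_nth)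
  moreover have "i = Suc j \<or> j = Suc i"
    if "i < Suc (length q)" "j < Suc (length q)" "E ((x # q) ! i) ((x # q) ! j)" for i j
    using that assms(1,4) unfolding induced_path_def
    by (cases i; cases j) (auto simp: adj_sym)
  ultimately show ?thesis unfolding induced_path_def by simp
qed

lemma exists_longest_induced_path:
  "\<exists>q. induced_path V E q \<and> (\<forall>p. induced_path V E p \<longrightarrow> length p \<le> length q)"
proof -
  obtain x where "x \<in> V" using V_nonempty by blast
  then have "induced_path V E [x]" unfolding induced_path_def is_path_def by simp
  moreover have "length p < Suc (card V)" if "induced_path V E p" for p
    using that card_mono[OF finite_V] distinct_card
    unfolding induced_path_def is_path_def by (metis less_Suc_eq_le)
  ultimately show ?thesis using ex_has_greatest_nat[of "induced_path V E" "[x]" length] by blast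
qed

end

locale longest_induced_path = bull_chair_free_graph +
  fixes q :: "'a list"
  assumes claw_free: "claw_free E" and induced: "induced_path V E q"
    and longest: "\<And>p. induced_path V E p \<Longrightarrow> length p \<le> length q"
begin

abbreviation r :: nat where "r \<equiv> length q"

lemma path_nonempty: "0 < r"
  using induced unfolding induced_path_def is_path_def by simp

lemma path_not_Nil [simp]: "q \<noteq> []"
  using path_nonempty by simp

lemma path_in_V: "i < r \<Longrightarrow> q ! i \<in> V"
  using induced unfolding induced_path_def is_path_def by auto

lemma path_adj: "Suc i < r \<Longrightarrow> E (q ! i) (q ! Suc i) \<and> E (q ! Suc i) (q ! i)"
  using induced adj_sym unfolding induced_path_def is_path_def by blast

lemma path_nonadj: "i < r \<Longrightarrow> j < r \<Longrightarrow> i \<noteq> Suc j \<Longrightarrow> j \<noteq> Suc i \<Longrightarrow> \<not> E (q ! i) (q ! j)"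
  using induced unfolding induced_path_def by blast

lemma path_nth_eq_iff: "i < r \<Longrightarrow> j < r \<Longrightarrow> q ! i = q ! j \<longleftrightarrow> i = j"
  using induced unfolding induced_path_def is_path_def by (simp add: nth_eq_iff_index_eq)

lemma off_path_ne: "v \<notin> set q \<Longrightarrow> i < r \<Longrightarrow> v \<noteq> q ! i"
  by auto

lemma no_claw: "E c x \<Longrightarrow> E c y \<Longrightarrow> E c z \<Longrightarrow> distinct [x, y, z] \<Longrightarrow> E x y \<or> E x z \<or> E y z"
  using claw_free unfolding claw_free_def by blast

lemma longest_induced_path_rev: "longest_induced_path V E (rev q)"
  using induced_path_rev[OF induced] longest claw_free by unfold_locales auto

lemma no_pendant_at_start:
  assumes "v \<in> V - set q" "E v (q ! 0)" "\<And>k. 0 < k \<Longrightarrow> k < r \<Longrightarrow> \<not> E v (q ! k)"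
  shows False
  using longest[OF induced_path_Cons[OF induced assms]] by simp

lemma no_pendant_edge_at_start:
  assumes v: "v \<in> V - set q" "\<And>k. k < r \<Longrightarrow> \<not> E v (q ! k)"
    and w: "w \<in> V - set q" "E v w" "E w (q ! 0)" "\<And>k. 0 < k \<Longrightarrow> k < r \<Longrightarrow> \<not> E w (q ! k)"
  shows False
proof -
  have "induced_path V E (w # q)" using induced_path_Cons[OF induced w(1,3,4)] .
  moreover have "v \<in> V - set (w # q)" using v(1) w(2) by auto
  moreover have "\<not> E v ((w # q) ! k)" if "0 < k" "k < length (w # q)" for k
    using v(2) that by (cases k) auto
  ultimately have "induced_path V E (v # w # q)" using induced_path_Cons w(2) by (metis nth_Cons_0)
  then show False using longest by fastforce
qed

lemma no_pendant_at_end: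
  assumes "v \<in> V - set q" "E v (q ! (r - 1))" "\<And>k. k < r - 1 \<Longrightarrow> \<not> E v (q ! k)"
  shows False
proof -
  interpret rev: longest_induced_path V E "rev q" by (rule longest_induced_path_rev)
  show False
  proof (rule rev.no_pendant_at_start)
    show "v \<in> V - set (rev q)" "E v (rev q ! 0)" using assms(1,2) path_nonempty by (auto simp: rev_nth)
    show "\<not> E v (rev q ! k)" if "0 < k" "k < length (rev q)" for k
      using assms(3)[of "r - Suc k"] that by (simp add: rev_nth)
  qed
qed

lemma no_pendant_edge_at_end:
  assumes v: "v \<in> V - set q" "\<And>k. k < r \<Longrightarrow> \<not> E v (q ! k)"
    and w: "w \<in> V - set q" "E v w" "E w (q ! (r - 1))" "\<And>k. k < r - 1 \<Longrightarrow> \<not> E w (q ! k)"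
  shows False
proof -
  interpret rev: longest_induced_path V E "rev q" by (rule longest_induced_path_rev)
  show False
  proof (rule rev.no_pendant_edge_at_start)
    show "v \<in> V - set (rev q)" "w \<in> V - set (rev q)" "E v w" "E w (rev q ! 0)"
      using v(1) w(1-3) path_nonempty by (auto simp: rev_nth)
    show "\<not> E v (rev q ! k)" if "k < length (rev q)" for k
      using v(2)[of "r - Suc k"] that by (simp add: rev_nth)
    show "\<not> E w (rev q ! k)" if "0 < k" "k < length (rev q)" for k
      using w(4)[of "r - Suc k"] that by (simp add: rev_nth)
  qed
qed

lemma claw_free_next_adj:
  assumes "v \<notin> set q" "E v (q ! j)" "0 < j" "Suc j < r" "\<not> E v (q ! (j - 1))"
  shows "E v (q ! Suc j)"
proof -
  have "E (q ! j) (q ! (j - 1))" "E (q ! j) (q ! Suc j)"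
    using path_adj[of "j - 1"] path_adj[of j] assms(3,4) by auto
  moreover have "distinct [q ! (j - 1), q ! Suc j, v]" "\<not> E (q ! (j - 1)) (q ! Suc j)"
    using assms(1,3,4) path_nth_eq_iff[of "j - 1" "Suc j"] path_nonadj[of "j - 1" "Suc j"] by auto
  ultimately show ?thesis
    using no_claw[of "q ! j" "q ! (j - 1)" "q ! Suc j" v] assms(2,5) by (auto simp: adj_sym)
qed

definition first_nbr :: "'a \<Rightarrow> nat" where
  "first_nbr v = (LEAST j. j < r \<and> E v (q ! j))"

lemma first_nbr_spec:
  assumes "j < r" "E v (q ! j)"
  shows "first_nbr v < r" "E v (q ! first_nbr v)" "\<And>k. k < first_nbr v \<Longrightarrow> \<not> E v (q ! k)"
proof -
  show "first_nbr v < r" "E v (q ! first_nbr v)"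
    using LeastI[of "\<lambda>j. j < r \<and> E v (q ! j)"] assms unfolding first_nbr_def by auto
  show "\<not> E v (q ! k)" if "k < first_nbr v" for k
    using not_less_Least[of k "\<lambda>j. j < r \<and> E v (q ! j)"] that \<open>first_nbr v < r\<close>
    unfolding first_nbr_def by auto
qed

context
  fixes v w :: 'a
  assumes v: "v \<in> V - set q" "\<And>k. k < r \<Longrightarrow> \<not> E v (q ! k)"
    and w: "w \<in> V - set q" "E v w"
begin

lemma nbrs_consecutive:
  assumes "i < r" "j < r" "E w (q ! i)" "E w (q ! j)" "i \<noteq> j"
  shows "i = Suc j \<or> j = Suc i"
proof (rule ccontr)
  assume "\<not> ?thesis"
  then have "\<not> E (q ! i) (q ! j)" using path_nonadj assms(1,2) by blast
  moreover have "distinct [q ! i, q ! j, v]" using path_nth_eq_iff assms v(1) by auto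
  ultimately show False
    using no_claw[of w "q ! i" "q ! j" v] assms(1-4) v(2) w(2) by (auto simp: adj_sym)
qed

lemma no_two_nbrs:
  assumes j: "Suc j < r" "E w (q ! j)" "E w (q ! Suc j)" "\<And>k. k < j \<Longrightarrow> \<not> E w (q ! k)"
  shows False
proof (cases j)
  case (Suc i)
  have "\<not> E (q ! i) (q ! Suc j)" using path_nonadj[of i "Suc j"] Suc j(1) by simp
  then show False
    using no_bull[of "q ! j" w "q ! Suc j" "q ! i" v] path_adj[of i] path_adj[of j] j v(2)[of i] v(2)[of j]
      v(2)[of "Suc j"] Suc w(2) by (auto simp: adj_sym)
next
  case 0
  show False
  proof (cases "2 < r")
    case True
    have "\<not> E w (q ! 2)" using nbrs_consecutive[of 0 2] True j(2) 0 path_nonempty by auto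
    moreover have "\<not> E (q ! 2) (q ! 0)" using path_nonadj[of 2 0] True by simp
    moreover have "E (q ! 2) (q ! 1)" using path_adj[of 1] True by (simp add: numeral_2_eq_2)
    ultimately show False
      using no_bull[of "q ! 1" w "q ! 0" "q ! 2" v] path_adj[of 0] j(2,3) 0 v(2)[of 0] v(2)[of 1]
        v(2)[of 2] True w(2) by (auto simp: adj_sym)
  next
    case False
    then have r2: "r = 2" using j(1) 0 by auto
    have "induced_path V E [q ! 0]" using path_in_V[OF path_nonempty] unfolding induced_path_def is_path_def by simp
    moreover have "w \<noteq> q ! 0" "v \<noteq> q ! 0" "v \<noteq> w"
      using v(1) w nth_mem[OF path_nonempty] by auto
    ultimately have "induced_path V E [w, q ! 0]" "v \<noteq> w" "v \<noteq> q ! 0"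
      using induced_path_Cons[of "[q ! 0]" w] w(1) j(2) 0 by auto
    then have "induced_path V E [v, w, q ! 0]"
      using induced_path_Cons[of "[w, q ! 0]" v] v w(2) path_nonempty by (auto simp: less_Suc_eq)
    then show False using longest r2 by fastforce
  qed
qed

lemma no_single_nbr:
  assumes j: "j < r" "E w (q ! j)" "\<And>k. k < r \<Longrightarrow> k \<noteq> j \<Longrightarrow> \<not> E w (q ! k)"
  shows False
proof -
  consider "j = 0" | "0 < j" "Suc j < r" | "j = r - 1" "0 < j" using j(1) by linarith
  then show False
  proof cases
    case 1
    then show False using no_pendant_edge_at_start[OF v w] j by auto
  next
    case 2
    then show False using claw_free_next_adj[of w j] w(1) j by auto
  next
    case 3
    then show False using no_pendant_edge_at_end[OF v w] j by auto
  qed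
qed

end

lemma path_dominating:
  assumes "u \<in> V"
  shows "u \<in> set q \<or> (\<exists>j<r. E u (q ! j))"
proof (rule ccontr)
  define U where "U = {u\<in>V - set q. \<forall>j<r. \<not> E u (q ! j)}"
  assume "\<not> ?thesis"
  then have "U \<subseteq> V" "u \<in> U" "q ! 0 \<in> V - U"
    using assms path_in_V[OF path_nonempty] path_nonempty unfolding U_def by auto
  then obtain v w where vw: "v \<in> U" "w \<in> V - U" "E v w" using connected_edge_leaving by blast
  then have v: "v \<in> V - set q" "\<And>k. k < r \<Longrightarrow> \<not> E v (q ! k)" unfolding U_def by auto
  have "w \<notin> set q" using v(2) vw(3) by (auto simp: in_set_conv_nth)
  then have w: "w \<in> V - set q" "E v w" using vw by auto
  then obtain j where "j < r" "E w (q ! j)" using vw(2) unfolding U_def by auto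
  note j0 = first_nbr_spec[OF this]
  show False
  proof (cases "Suc (first_nbr w) < r \<and> E w (q ! Suc (first_nbr w))")
    case True
    then show False using no_two_nbrs[OF v w] j0 by blast
  next
    case False
    have "\<not> E w (q ! k)" if "k < r" "k \<noteq> first_nbr w" for k
      using j0 False nbrs_consecutive[OF v w that(1) j0(1)] that by (metis not_less_eq)
    then show False using no_single_nbr[OF v w j0(1,2)] by blast
  qed
qed

lemma first_nbr_beyond_start:
  assumes "v \<in> V - set q" "\<not> E v (q ! 0)"
  shows "0 < first_nbr v" "Suc (first_nbr v) < r" "E v (q ! Suc (first_nbr v))"
proof -
  obtain j where "j < r" "E v (q ! j)" using path_dominating assms(1) by blast
  note j0 = first_nbr_spec[OF this]
  show pos: "0 < first_nbr v" using j0(2) assms(2) by (cases "first_nbr v") auto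
  show "Suc (first_nbr v) < r"
  proof (rule ccontr)
    assume "\<not> Suc (first_nbr v) < r"
    then have "first_nbr v = r - 1" using j0(1) by linarith
    then show False using no_pendant_at_end[OF assms(1)] j0 by auto
  qed
  then show "E v (q ! Suc (first_nbr v))"
    using claw_free_next_adj[of v "first_nbr v"] assms(1) j0(2,3) pos by auto
qed

text \<open>The Hamiltonian path runs through \<open>start_clique\<close>, q!0, \<open>slot 0\<close>, q!1, \<open>slot 1\<close>, ...\<close>

definition start_clique :: "'a set" where
  "start_clique = {v\<in>V - set q. E v (q ! 0) \<and> \<not> E v (q ! 1)}"

definition slot :: "nat \<Rightarrow> 'a set" where
  "slot j = {v\<in>V - set q - start_clique. first_nbr v = j}"

lemma slot_disjoint:
  assumes "i < r" "j < r" "i \<noteq> j"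
  shows "insert (q ! i) (slot i) \<inter> insert (q ! j) (slot j) = {}"
  using assms path_nth_eq_iff unfolding slot_def by auto

lemma finite_slot: "finite (slot j)"
  by (rule finite_subset[OF _ finite_V]) (auto simp: slot_def)

lemma finite_start_clique: "finite start_clique"
  by (rule finite_subset[OF _ finite_V]) (auto simp: start_clique_def)

lemma off_path_covered:
  assumes "v \<in> V - set q"
  shows "v \<in> start_clique \<or> (first_nbr v < r \<and> v \<in> slot (first_nbr v))"
  using path_dominating[of v] first_nbr_spec assms unfolding slot_def by blast

context
  assumes long: "5 \<le> r"
begin

lemma start_nbr_nonadj_3:
  assumes v: "v \<in> V - set q" "E v (q ! 0)" "E v (q ! 1)"
  shows "\<not> E v (q ! 3)"
proof
  assume v3: "E v (q ! 3)"
  have adj: "E (q ! i) (q ! Suc i)" "E (q ! Suc i) (q ! i)" if "i < 4" for i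
    using path_adj[of i] that long by auto
  have nonadj: "\<not> E (q ! i) (q ! j)" if "i < 5" "j < 5" "i \<noteq> Suc j" "j \<noteq> Suc i" for i j
    using path_nonadj that long by auto
  have ne: "q ! i \<noteq> q ! j" if "i < 5" "j < 5" "i \<noteq> j" for i j
    using path_nth_eq_iff that long by auto
  show False
  proof (cases "E v (q ! 2)"; cases "E v (q ! 4)")
    assume "E v (q ! 2)" "E v (q ! 4)"
    then show False
      using no_claw[of v "q ! 0" "q ! 2" "q ! 4"] v ne[of 0 2] ne[of 0 4] ne[of 2 4]
        nonadj[of 0 2] nonadj[of 0 4] nonadj[of 2 4] by auto
  next
    assume "E v (q ! 2)" "\<not> E v (q ! 4)"
    then show False
      using no_bull[of "q ! 3" v "q ! 2" "q ! 4" "q ! 0"] v v3 adj[of 2] adj[of 3]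
        nonadj[of 4 2] nonadj[of 0 3] nonadj[of 0 2] nonadj[of 4 0] by (auto simp: adj_sym eval_nat_numeral)
  next
    assume "\<not> E v (q ! 2)" "E v (q ! 4)"
    then show False
      using no_bull[of "q ! 1" v "q ! 0" "q ! 2" "q ! 4"] v adj[of 0] adj[of 1]
        nonadj[of 2 0] nonadj[of 4 1] nonadj[of 4 0] nonadj[of 2 4] by (auto simp: adj_sym eval_nat_numeral)
  next
    assume "\<not> E v (q ! 2)" "\<not> E v (q ! 4)"
    then show False
      using no_claw[of "q ! 3" "q ! 2" "q ! 4" v] v v3 adj[of 2] adj[of 3] ne[of 2 4]
        nonadj[of 2 4] off_path_ne[of v 2] off_path_ne[of v 4] long
      by (auto simp: adj_sym eval_nat_numeral)
  qed
qed

lemma slot_adj: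
  assumes "v \<in> slot j"
  shows "Suc j < r" "E v (q ! j)" "E v (q ! Suc j)" "0 < j \<Longrightarrow> \<not> E v (q ! (j - 1))"
proof -
  have v: "v \<in> V - set q" "E v (q ! 0) \<Longrightarrow> E v (q ! 1)" "first_nbr v = j"
    using assms unfolding slot_def start_clique_def by auto
  obtain i where "i < r" "E v (q ! i)" using path_dominating v(1) by blast
  note j = first_nbr_spec[OF this, unfolded v(3)]
  show "E v (q ! j)" "0 < j \<Longrightarrow> \<not> E v (q ! (j - 1))" using j by auto
  have "Suc j < r \<and> E v (q ! Suc j)"
  proof (cases "E v (q ! 0)")
    case True
    then have "j = 0" using j(3)[of 0] by blast
    then show ?thesis using True v(2) long by simp
  next
    case False
    then show ?thesis using first_nbr_beyond_start[OF v(1)] v(3) by simp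
  qed
  then show "Suc j < r" "E v (q ! Suc j)" by auto
qed

lemma slot_clique:
  assumes x: "x \<in> slot j" and y: "y \<in> slot j" and "x \<noteq> y"
  shows "E x y"
proof (rule ccontr)
  assume nxy: "\<not> E x y"
  have off: "x \<in> V - set q" "y \<in> V - set q" using x y unfolding slot_def by auto
  note ax = slot_adj[OF x] and ay = slot_adj[OF y]
  show False
  proof (cases j)
    case 0
    have x01: "E x (q ! 0)" "E x (q ! 1)" "E y (q ! 0)" "E y (q ! 1)" using ax ay 0 by auto
    have x3: "\<not> E x (q ! 3)" "\<not> E y (q ! 3)"
      using start_nbr_nonadj_3[OF off(1) x01(1,2)] start_nbr_nonadj_3[OF off(2) x01(3,4)] by blast+
    have d: "x \<noteq> q ! i" "y \<noteq> q ! i" if "i < r" for i using off that by auto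
    have q12: "E (q ! 1) (q ! 2)" "E (q ! 2) (q ! 3)" "E (q ! 2) (q ! 1)" "E (q ! 3) (q ! 2)"
      using path_adj[of 1] path_adj[of 2] long by (auto simp: eval_nat_numeral)
    have q13: "\<not> E (q ! 3) (q ! 1)" using path_nonadj[of 3 1] long by auto
    show False
    proof (cases "E x (q ! 2)"; cases "E y (q ! 2)")
      assume "E x (q ! 2)" "E y (q ! 2)"
      then show False
        using no_claw[of "q ! 2" "q ! 3" x y] q12 x3 nxy d[of 3] \<open>x \<noteq> y\<close> long by (auto simp: adj_sym)
    next
      assume "\<not> E x (q ! 2)" "\<not> E y (q ! 2)"
      then show False
        using no_claw[of "q ! 1" "q ! 2" x y] q12 x01 nxy d[of 2] \<open>x \<noteq> y\<close> long by (auto simp: adj_sym)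
    next
      assume "E x (q ! 2)" "\<not> E y (q ! 2)"
      then show False
        using no_bull[of "q ! 1" "q ! 2" x y "q ! 3"] q12 q13 x01 x3 nxy by (auto simp: adj_sym)
    next
      assume "\<not> E x (q ! 2)" "E y (q ! 2)"
      then show False
        using no_bull[of "q ! 1" "q ! 2" y x "q ! 3"] q12 q13 x01 x3 nxy by (auto simp: adj_sym)
    qed
  next
    case (Suc i)
    have "i < r" "j < r" using ax(1) Suc by auto
    then have "E (q ! j) (q ! i)" "q ! i \<noteq> x" "q ! i \<noteq> y" using path_adj[of i] Suc off by auto
    then show False
      using no_claw[of "q ! j" "q ! i" x y] ax(2,4) ay(2,4) nxy \<open>x \<noteq> y\<close> Suc by (auto simp: adj_sym)
  qed
qed

lemma start_clique_clique:
  assumes "x \<in> start_clique" "y \<in> start_clique" "x \<noteq> y"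
  shows "E x y"
proof (rule ccontr)
  assume "\<not> E x y"
  moreover have "q ! 1 \<noteq> x" "q ! 1 \<noteq> y" using assms long unfolding start_clique_def by auto
  ultimately show False
    using no_claw[of "q ! 0" "q ! 1" x y] path_adj[of 0] assms long
    unfolding start_clique_def by (auto simp: adj_sym)
qed

lemma slot_block:
  assumes "j < r"
  shows "\<exists>b. set b = insert (q ! j) (slot j) \<and> distinct b \<and> successively E b \<and> hd b = q ! j
    \<and> (Suc j < r \<longrightarrow> E (last b) (q ! Suc j))"
proof -
  have "\<And>x y. x \<in> slot j \<Longrightarrow> y \<in> slot j \<Longrightarrow> x \<noteq> y \<Longrightarrow> E x y" by (rule slot_clique)
  then obtain xs where xs: "set xs = slot j" "distinct xs" "successively E xs"
    using exists_clique_listing[OF finite_slot] by blast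
  have "successively E (q ! j # xs)"
    using xs slot_adj(2)[of "hd xs" j] hd_in_set by (auto simp: successively_Cons adj_sym)
  moreover have "q ! j \<notin> slot j" using assms unfolding slot_def by auto
  moreover have "E (last (q ! j # xs)) (q ! Suc j)" if "Suc j < r"
    using path_adj[OF that] slot_adj(3) xs(1) last_in_set[of xs] by (cases xs) auto
  ultimately show ?thesis using xs by (intro exI[of _ "q ! j # xs"]) auto
qed

lemma path_through_slots:
  assumes "0 < n" "n \<le> r"
  shows "\<exists>p. set p = (\<Union>j<n. insert (q ! j) (slot j)) \<and> distinct p \<and> successively E p \<and> hd p = q ! 0
    \<and> (n < r \<longrightarrow> E (last p) (q ! n))"
  using assms
proof (induction n)
  case (Suc n)
  obtain b where b: "set b = insert (q ! n) (slot n)" "distinct b" "successively E b" "hd b = q ! n"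
    "Suc n < r \<longrightarrow> E (last b) (q ! Suc n)"
    using slot_block[of n] Suc.prems by auto
  show ?case
  proof (cases n)
    case 0
    then show ?thesis using b by (intro exI[of _ b]) auto
  next
    case (Suc m)
    then obtain p where p: "set p = (\<Union>j<n. insert (q ! j) (slot j))" "distinct p" "successively E p"
      "hd p = q ! 0" "E (last p) (q ! n)"
      using Suc.IH Suc.prems by auto
    have "p \<noteq> []" "b \<noteq> []" using p(1) b(1) Suc by auto
    have "set (p @ b) = (\<Union>j<Suc n. insert (q ! j) (slot j))"
      using p(1) b(1) by (auto simp: lessThan_Suc)
    moreover have "insert (q ! j) (slot j) \<inter> insert (q ! n) (slot n) = {}" if "j < n" for j
      using slot_disjoint[of j n] that Suc.prems by simp
    then have "set p \<inter> set b = {}" using p(1) b(1) by blast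
    moreover have "successively E (p @ b)" using p(3,5) b(3,4) \<open>p \<noteq> []\<close> \<open>b \<noteq> []\<close> by (simp add: successively_append_iff)
    ultimately show ?thesis
      using p(2,4) b(2,5) \<open>p \<noteq> []\<close> \<open>b \<noteq> []\<close> by (intro exI[of _ "p @ b"]) simp
  qed
qed simp

lemma hamiltonian_path: "\<exists>h. is_path V E h \<and> set h = V"
proof -
  obtain p where p: "set p = (\<Union>j<r. insert (q ! j) (slot j))" "distinct p" "successively E p" "hd p = q ! 0"
    using path_through_slots[OF path_nonempty order_refl] by blast
  have "\<And>x y. x \<in> start_clique \<Longrightarrow> y \<in> start_clique \<Longrightarrow> x \<noteq> y \<Longrightarrow> E x y"
    by (rule start_clique_clique)
  then obtain ws where ws: "set ws = start_clique" "distinct ws" "successively E ws"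
    using exists_clique_listing[OF finite_start_clique] by blast
  have "start_clique \<subseteq> V" "\<And>j. slot j \<subseteq> V" unfolding start_clique_def slot_def by auto
  then have "set (ws @ p) \<subseteq> V" using ws(1) p(1) path_in_V by auto
  moreover have "v \<in> set (ws @ p)" if "v \<in> V" for v
  proof (cases "v \<in> set q")
    case True
    then obtain j where "j < r" "v = q ! j" by (auto simp: in_set_conv_nth)
    then show ?thesis using p(1) by auto
  next
    case False
    then have "v \<in> start_clique \<or> (first_nbr v < r \<and> v \<in> slot (first_nbr v))"
      using off_path_covered that by blast
    then show ?thesis using ws(1) p(1) by auto
  qed
  ultimately have "set (ws @ p) = V" by blast
  have "start_clique \<inter> insert (q ! j) (slot j) = {}" if "j < r" for j
    using that unfolding start_clique_def slot_def by auto
  then have "set ws \<inter> set p = {}" using ws(1) p(1) by blast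
  then have "distinct (ws @ p)" using ws(2) p(2) by simp
  have "q ! 0 \<in> set p" using p(1) path_nonempty by auto
  then have "p \<noteq> []" by auto
  moreover have "E (last ws) (hd p)" if "ws \<noteq> []"
  proof -
    have "last ws \<in> start_clique" using ws(1) last_in_set[OF that] by simp
    then show ?thesis using p(4) unfolding start_clique_def by simp
  qed
  ultimately have "successively E (ws @ p)" using ws(3) p(3) by (auto simp: successively_append_iff)
  then show ?thesis
    using \<open>set (ws @ p) = V\<close> \<open>distinct (ws @ p)\<close> \<open>p \<noteq> []\<close> unfolding is_path_iff_successively by blast
qed

end

lemma lpt_le_5: "lpt V E \<le> 5"
proof (cases "r \<le> 5")
  case True
  have "set q \<subseteq> V" using induced unfolding induced_path_def is_path_def by blast
  moreover have "u \<in> set q \<or> (\<exists>d\<in>set q. E u d)" if "u \<in> V" for u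
    using path_dominating[OF that] nth_mem by blast
  ultimately have "dominating V E (set q)" unfolding dominating_def by blast
  then have "lpt V E \<le> card (set q)" using lpt_le_card_dominating[OF simple] by blast
  also have "\<dots> \<le> 5" using card_length[of q] True by linarith
  finally show ?thesis .
next
  case False
  then obtain h where "is_path V E h" "set h = V" using hamiltonian_path by auto
  then show ?thesis using lpt_le_one_if_hamiltonian_path[OF simple] by fastforce
qed

end

theorem theorem3p9:
  fixes V :: "'a set" and E :: "'a \<Rightarrow> 'a \<Rightarrow> bool"
  assumes "simple_graph V E" and "connected_graph V E" and "bull_chair_free V E"
  shows "lpt V E \<le> 5"
proof -
  interpret bull_chair_free_graph V E using assms by unfold_locales
  show ?thesis
  proof (cases "claw_free E")
    case True
    obtain q where "induced_path V E q" "\<And>p. induced_path V E p \<Longrightarrow> length p \<le> length q"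
      using exists_longest_induced_path by blast
    then interpret longest_induced_path V E q using True by unfold_locales
    show ?thesis by (rule lpt_le_5)
  next
    case False
    then obtain v x y z where "E v x" "E v y" "E v z" "distinct [x, y, z]" "\<not> E x y" "\<not> E x z" "\<not> E y z"
      unfolding claw_free_def by blast
    then interpret claw_graph V E x y z v
      using adj_in_V by unfold_locales (auto simp: independent_triple_def)
    show ?thesis by (rule lpt_le_5)
  qed
qed

end
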